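(* Let $D=\mathrm{diag}(d_1,\dots,d_n)\in\mathbb{D}^n_+$, $W\in\mathbb{R}^{n\times n}$, $u\in\mathbb{R}^n$, $A:=W-D$ with rows $A_i^\top$, $\mathcal X=\{x\in\mathbb{R}^n: Dx\in[0,1]^n\}$, $\Lambda=\mathrm{diag}(\lambda_1,\dots,\lambda_n)\in\mathbb{D}^n_+$, and $$V_\infty(x)=\max_{\zeta\in\{0,1\}^n}(Ax+u)^\top\Lambda(\zeta-Dx).$$ Then: (i) for every $x\in\mathcal X$, $V_\infty(x)=\sum_{i=1}^n\lambda_i\big((A_i^\top x+u_i)_+(1-d_ix_i)+(A_i^\top x+u_i)_-d_ix_i\big)=\sum_{i=1}^n\lambda_i\big((A_i^\top x+u_i)_+-d_i(A_i^\top x+u_i)x_i\big)$; (ii) $V_\infty$ is globally Lipschitz on $\mathcal X$ and $V_\infty(x)\ge0$ for all $x\in\mathcal X$; (iii) for $x\in\mathcal X$, $V_\infty(x)=0$ if and only if $x$ is an equilibrium of the hard-selector inclusion $x'\in-Dx+\mathcal H(Ax+u)$; in particular, if $A$ is Lyapunov diagonally stable (with $\Lambda$ a diagonal certificate), then $V_\infty$ is positive definite on $\mathcal X$ with respect to the unique equilibrium $x^\star$.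
   Context: $\mathbb{D}^n_+$ is the set of positive diagonal matrices. $(z)_+=\max(0,z)$, $(z)_-=-\min(0,z)$. $h(z)=\{0\}$ if $z<0$, $[0,1]$ if $z=0$, $\{1\}$ if $z>0$, and $\mathcal H(x)=h(x_1)\times\cdots\times h(x_n)$; an equilibrium of the inclusion is $x$ with $0\in-Dx+\mathcal H(Ax+u)$. A matrix $A$ is Lyapunov diagonally stable with diagonal certificate $\Lambda\in\mathbb{D}^n_+$ if $A^\top\Lambda+\Lambda A\prec0$; in the paper $\Lambda$ in $V_\infty$ is taken to be this certificate. *)

theory Defs
  imports "HOL-Analysis.Analysis"
begin

definition diagm :: "real^'n \<Rightarrow> real^'n^'n" where
  "diagm d = (\<chi> i j. if i = j then d $ i else 0)"

definition pospart :: "real \<Rightarrow> real" where "pospart z = max 0 z"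
definition negpart :: "real \<Rightarrow> real" where "negpart z = - min 0 z"

definition hsel :: "real \<Rightarrow> real set" where
  "hsel z = (if z < 0 then {0} else if z = 0 then {0..1} else {1})"

definition Hsel :: "real^'n \<Rightarrow> (real^'n) set" where
  "Hsel y = {\<eta>. \<forall>i. \<eta> $ i \<in> hsel (y $ i)}"

definition is_equilibrium :: "real^'n \<Rightarrow> real^'n^'n \<Rightarrow> real^'n \<Rightarrow> real^'n \<Rightarrow> bool" where
  "is_equilibrium d A u x \<longleftrightarrow> (0::real^'n) \<in> {- (diagm d *v x) + \<eta> | \<eta>. \<eta> \<in> Hsel (A *v x + u)}"

definition Xset :: "real^'n \<Rightarrow> (real^'n) set" where
  "Xset d = {x. \<forall>i. (diagm d *v x) $ i \<in> {0..1}}"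

definition Vinf :: "real^'n \<Rightarrow> real^'n^'n \<Rightarrow> real^'n \<Rightarrow> real^'n \<Rightarrow> real^'n \<Rightarrow> real" where
  "Vinf d A u lam x = Max {(A *v x + u) \<bullet> (diagm lam *v (\<zeta> - diagm d *v x)) | \<zeta>. \<forall>i. \<zeta> $ i \<in> {0, 1}}"

definition neg_definite :: "real^'n^'n \<Rightarrow> bool" where
  "neg_definite M \<longleftrightarrow> (\<forall>x. x \<noteq> 0 \<longrightarrow> x \<bullet> (M *v x) < 0)"

definition lds_certificate :: "real^'n^'n \<Rightarrow> real^'n \<Rightarrow> bool" where
  "lds_certificate A lam \<longleftrightarrow> (\<forall>i. lam $ i > 0) \<and>
     neg_definite (transpose A ** diagm lam + diagm lam ** A)"

end

theory Submission
  imports Defs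
begin

(* V_inf separates over coordinates: maximising y_i (zeta_i - t_i) over zeta_i in {0,1} gives
   (y_i)_+ (1 - t_i) + (y_i)_- t_i, a nonnegative quantity for t_i in [0,1] that vanishes exactly
   when t_i is a value of the hard selector at y_i.  This yields the closed form, nonnegativity and
   the zero set of V_inf; Lipschitz continuity follows from the closed form on the compact box X.
   Existence of an equilibrium is Brouwer's theorem for the clamped map
   D x |-> min 1 (max 0 (D x + A x + u)), and uniqueness under a diagonal Lyapunov certificate
   follows from monotonicity of the graph of h. *)

lemma diagm_mult_vec [simp]: "diagm d *v v = (\<chi> i. d $ i * v $ i)"
proof -
  have "(\<Sum>j\<in>UNIV. (if i = j then d $ i else 0) * v $ j) = d $ i * v $ i" for i
  proof -
    have "(\<Sum>j\<in>UNIV. (if i = j then d $ i else 0) * v $ j) = (\<Sum>j\<in>UNIV. if i = j then d $ j * v $ j else 0)"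
      by (rule sum.cong) auto
    then show ?thesis by simp
  qed
  then show ?thesis
    unfolding diagm_def matrix_vector_mult_def vec_eq_iff by simp
qed

lemma Xset_iff: "x \<in> Xset d \<longleftrightarrow> (\<forall>i. d $ i * x $ i \<in> {0..1})"
  by (simp add: Xset_def)

lemma Xset_eq_cbox:
  fixes d :: "real^'n"
  assumes "\<forall>i. d $ i > 0"
  shows "Xset d = cbox 0 (\<chi> i. 1 / d $ i)"
proof -
  have "d $ i * x $ i \<in> {0..1} \<longleftrightarrow> x $ i \<in> {0..1 / d $ i}" for x :: "real^'n" and i
  proof -
    have "d $ i > 0" using assms by simp
    then show ?thesis by (simp add: zero_le_mult_iff le_divide_eq mult.commute)
  qed
  then show ?thesis by (auto simp: Xset_iff mem_box_cart)
qed

lemma finite_binary_vectors: "finite {\<zeta>::real^'n. \<forall>i. \<zeta> $ i \<in> {0, 1}}"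
proof (rule finite_subset)
  show "{\<zeta>::real^'n. \<forall>i. \<zeta> $ i \<in> {0, 1}} \<subseteq> range (\<lambda>S. \<chi> i. if i \<in> S then 1 else 0)"
  proof
    fix \<zeta> :: "real^'n"
    assume "\<zeta> \<in> {\<zeta>. \<forall>i. \<zeta> $ i \<in> {0, 1}}"
    then have "\<zeta> = (\<chi> i. if i \<in> {i. \<zeta> $ i = 1} then 1 else 0)"
      by (auto simp: vec_eq_iff)
    then show "\<zeta> \<in> range (\<lambda>S. \<chi> i. if i \<in> S then 1 else 0)" by blast
  qed
qed simp

definition selector_gap :: "real \<Rightarrow> real \<Rightarrow> real" where
  "selector_gap y t = pospart y * (1 - t) + negpart y * t"

lemma selector_gap_alt: "selector_gap y t = pospart y - y * t"
  by (auto simp: selector_gap_def pospart_def negpart_def algebra_simps)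

lemma selector_gap_ge:
  assumes "z \<in> {0, 1}"
  shows "y * (z - t) \<le> selector_gap y t"
  using assms by (auto simp: selector_gap_alt pospart_def max_def algebra_simps)

lemma selector_gap_attained: "y * ((if y > 0 then 1 else 0) - t) = selector_gap y t"
  by (simp add: selector_gap_alt pospart_def algebra_simps)

lemma selector_gap_nonneg:
  assumes "t \<in> {0..1}"
  shows "0 \<le> selector_gap y t"
proof -
  have "0 \<le> pospart y" "0 \<le> negpart y" by (auto simp: pospart_def negpart_def)
  then show ?thesis using assms by (simp add: selector_gap_def)
qed

lemma selector_gap_eq_0_iff:
  assumes "t \<in> {0..1}"
  shows "selector_gap y t = 0 \<longleftrightarrow> t \<in> hsel y"
  using assms by (auto simp: selector_gap_def pospart_def negpart_def hsel_def)

lemma hsel_subset: "hsel y \<subseteq> {0..1}"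
  by (auto simp: hsel_def)

lemma hsel_monotone:
  assumes "t1 \<in> hsel y1" "t2 \<in> hsel y2"
  shows "0 \<le> (y1 - y2) * (t1 - t2)"
  using assms by (auto simp: hsel_def mult_le_0_iff zero_le_mult_iff split: if_splits)

lemma clamp_fixed_point_in_hsel:
  assumes "t = min 1 (max 0 (t + y))"
  shows "t \<in> hsel y"
  using assms by (auto simp: hsel_def min_def max_def split: if_splits)

lemma Vinf_eq_sum_selector_gap:
  fixes d lam u x :: "real^'n" and A :: "real^'n^'n"
  assumes lam: "\<forall>i. lam $ i \<ge> 0"
  shows "Vinf d A u lam x = (\<Sum>i\<in>UNIV. lam $ i * selector_gap ((A *v x) $ i + u $ i) (d $ i * x $ i))"
proof -
  define y where "y = A *v x + u"
  let ?f = "\<lambda>\<zeta>::real^'n. (A *v x + u) \<bullet> (diagm lam *v (\<zeta> - diagm d *v x))"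
  let ?Z = "{\<zeta>::real^'n. \<forall>i. \<zeta> $ i \<in> {0, 1}}"
  have f_eq: "?f \<zeta> = (\<Sum>i\<in>UNIV. lam $ i * (y $ i * (\<zeta> $ i - d $ i * x $ i)))" for \<zeta>
    by (simp add: y_def inner_vec_def algebra_simps)
  have "Max (?f ` ?Z) = (\<Sum>i\<in>UNIV. lam $ i * selector_gap (y $ i) (d $ i * x $ i))"
  proof (rule Max_eqI)
    show "finite (?f ` ?Z)" by (rule finite_imageI[OF finite_binary_vectors])
    show "b \<le> (\<Sum>i\<in>UNIV. lam $ i * selector_gap (y $ i) (d $ i * x $ i))" if "b \<in> ?f ` ?Z" for b
    proof -
      from that obtain \<zeta> where \<zeta>: "\<zeta> \<in> ?Z" "b = ?f \<zeta>" by blast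
      show ?thesis
        unfolding \<zeta>(2) f_eq
        using \<zeta>(1) lam by (intro sum_mono mult_left_mono selector_gap_ge) auto
    qed
    define z where "z = (\<chi> i. if y $ i > 0 then 1 else (0::real))"
    have z_in: "z \<in> ?Z" by (simp add: z_def)
    have f_z: "?f z = (\<Sum>i\<in>UNIV. lam $ i * selector_gap (y $ i) (d $ i * x $ i))"
      unfolding f_eq z_def by (simp only: vec_lambda_beta selector_gap_attained)
    show "(\<Sum>i\<in>UNIV. lam $ i * selector_gap (y $ i) (d $ i * x $ i)) \<in> ?f ` ?Z"
      by (rule rev_image_eqI[where f = ?f, OF z_in f_z[symmetric]])
  qed
  then show ?thesis
    unfolding Vinf_def by (simp add: y_def setcompr_eq_image)
qed

lemma Vinf_closed_forms:
  fixes d lam u x :: "real^'n" and A :: "real^'n^'n"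
  assumes lam: "\<forall>i. lam $ i \<ge> 0"
  shows "Vinf d A u lam x =
          (\<Sum>i\<in>UNIV. lam $ i * (pospart ((A *v x) $ i + u $ i) * (1 - d $ i * x $ i)
                                 + negpart ((A *v x) $ i + u $ i) * (d $ i * x $ i)))"
    and "Vinf d A u lam x =
          (\<Sum>i\<in>UNIV. lam $ i * (pospart ((A *v x) $ i + u $ i)
                                 - d $ i * ((A *v x) $ i + u $ i) * x $ i))"
  unfolding Vinf_eq_sum_selector_gap[OF lam]
   by (simp add: selector_gap_def) (simp only: selector_gap_alt ac_simps)

lemma Vinf_nonneg:
  assumes "\<forall>i. lam $ i \<ge> 0" "x \<in> Xset d"
  shows "0 \<le> Vinf d A u lam x"
  using assms by (simp add: Vinf_eq_sum_selector_gap Xset_iff sum_nonneg selector_gap_nonneg)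

lemma is_equilibrium_iff:
  "is_equilibrium d A u x \<longleftrightarrow> (\<forall>i. d $ i * x $ i \<in> hsel ((A *v x) $ i + u $ i))"
proof -
  have "is_equilibrium d A u x \<longleftrightarrow> diagm d *v x \<in> Hsel (A *v x + u)"
    unfolding is_equilibrium_def by (auto simp: eq_neg_iff_add_eq_0 add.commute)
  then show ?thesis by (simp add: Hsel_def)
qed

lemma equilibrium_in_Xset: "is_equilibrium d A u x \<Longrightarrow> x \<in> Xset d"
  using hsel_subset by (fastforce simp: is_equilibrium_iff Xset_iff)

lemma Vinf_eq_0_iff_equilibrium:
  assumes lam: "\<forall>i. lam $ i > 0" and x: "x \<in> Xset d"
  shows "Vinf d A u lam x = 0 \<longleftrightarrow> is_equilibrium d A u x"
proof -
  let ?g = "\<lambda>i. selector_gap ((A *v x) $ i + u $ i) (d $ i * x $ i)"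
  have t01: "d $ i * x $ i \<in> {0..1}" for i using x by (simp add: Xset_iff)
  have "Vinf d A u lam x = 0 \<longleftrightarrow> (\<forall>i. lam $ i * ?g i = 0)"
    using lam t01 by (simp add: Vinf_eq_sum_selector_gap less_imp_le sum_nonneg_eq_0_iff selector_gap_nonneg)
  also have "\<dots> \<longleftrightarrow> (\<forall>i. ?g i = 0)"
    using lam by (simp add: less_imp_neq[symmetric])
  also have "\<dots> \<longleftrightarrow> is_equilibrium d A u x"
    using t01 by (simp add: selector_gap_eq_0_iff is_equilibrium_iff)
  finally show ?thesis .
qed

lemma lipschitz_on_mult_bounded:
  fixes f g :: "'a::metric_space \<Rightarrow> real"
  assumes f: "Lf-lipschitz_on S f" and g: "Lg-lipschitz_on S g"
    and Bf: "0 \<le> Bf" "\<forall>x\<in>S. \<bar>f x\<bar> \<le> Bf" and Bg: "0 \<le> Bg" "\<forall>x\<in>S. \<bar>g x\<bar> \<le> Bg"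
  shows "(Bf * Lg + Bg * Lf)-lipschitz_on S (\<lambda>x. f x * g x)"
proof (rule lipschitz_onI)
  show "0 \<le> Bf * Lg + Bg * Lf"
    using Bf Bg lipschitz_on_nonneg[OF f] lipschitz_on_nonneg[OF g] by simp
  fix x y assume xy: "x \<in> S" "y \<in> S"
  have "\<bar>f x * g x - f y * g y\<bar> = \<bar>f x * (g x - g y) + g y * (f x - f y)\<bar>"
    by (simp add: algebra_simps)
  also have "\<dots> \<le> \<bar>f x\<bar> * \<bar>g x - g y\<bar> + \<bar>g y\<bar> * \<bar>f x - f y\<bar>"
    by (metis abs_mult abs_triangle_ineq)
  also have "\<dots> \<le> Bf * (Lg * dist x y) + Bg * (Lf * dist x y)"
    using lipschitz_onD[OF f xy] lipschitz_onD[OF g xy] Bf Bg xy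
    by (intro add_mono mult_mono) (auto simp: dist_real_def)
  finally show "dist (f x * g x) (f y * g y) \<le> (Bf * Lg + Bg * Lf) * dist x y"
    by (simp add: dist_real_def algebra_simps)
qed

lemma lipschitz_on_mult_compact:
  fixes f g :: "'a::metric_space \<Rightarrow> real"
  assumes S: "compact S" and f: "Lf-lipschitz_on S f" and g: "Lg-lipschitz_on S g"
  shows "\<exists>L. L-lipschitz_on S (\<lambda>x. f x * g x)"
proof -
  have "bounded (f ` S)" "bounded (g ` S)"
    using f g S by (auto intro!: compact_imp_bounded compact_continuous_image lipschitz_on_continuous_on)
  then obtain Bf Bg where "0 < Bf" "\<forall>x\<in>S. \<bar>f x\<bar> \<le> Bf" "0 < Bg" "\<forall>x\<in>S. \<bar>g x\<bar> \<le> Bg"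
    by (auto simp: bounded_pos)
  then have "(Bf * Lg + Bg * Lf)-lipschitz_on S (\<lambda>x. f x * g x)"
    by (intro lipschitz_on_mult_bounded[OF f g]) auto
  then show ?thesis by blast
qed

lemma lipschitz_on_sum:
  fixes f :: "'i \<Rightarrow> 'a::metric_space \<Rightarrow> 'b::real_normed_vector"
  assumes "finite I" "\<And>i. i \<in> I \<Longrightarrow> (L i)-lipschitz_on S (f i)"
  shows "(\<Sum>i\<in>I. L i)-lipschitz_on S (\<lambda>x. \<Sum>i\<in>I. f i x)"
  using assms
proof (induction I rule: finite_induct)
  case empty
  show ?case using lipschitz_on_constant[of S 0] by simp
next
  case (insert i I)
  then show ?case by (simp add: lipschitz_on_add)
qed

lemma lipschitz_on_pospart: "1-lipschitz_on S pospart"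
  by (rule lipschitz_onI) (auto simp: dist_real_def pospart_def)

lemma bounded_linear_plus_const_lipschitz:
  assumes "bounded_linear f"
  shows "\<exists>L. L-lipschitz_on S (\<lambda>x. f x + c)"
proof -
  obtain L where "L-lipschitz_on S f"
    using bounded_linear.lipschitz_boundE[OF assms] by blast
  then have "(L + 0)-lipschitz_on S (\<lambda>x. f x + c)"
    by (intro lipschitz_on_add lipschitz_on_constant)
  then show ?thesis by blast
qed

lemma Vinf_lipschitz:
  fixes d lam u :: "real^'n" and A :: "real^'n^'n"
  assumes d: "\<forall>i. d $ i > 0" and lam: "\<forall>i. lam $ i \<ge> 0"
  shows "\<exists>C. C-lipschitz_on (Xset d) (Vinf d A u lam)"
proof -
  have X: "compact (Xset d)" using Xset_eq_cbox[OF d] by simp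
  have "\<forall>i. \<exists>C. C-lipschitz_on (Xset d)
           (\<lambda>x. lam $ i * selector_gap ((A *v x) $ i + u $ i) (d $ i * x $ i))"
  proof
    fix i
    obtain Ly where Ly: "Ly-lipschitz_on (Xset d) (\<lambda>x. (A *v x) $ i + u $ i)"
      using bounded_linear_plus_const_lipschitz
        [OF bounded_linear_compose[OF bounded_linear_vec_nth matrix_vector_mul_bounded_linear],
         where S = "Xset d" and c = "u $ i"]
      by auto
    obtain Lx where Lx: "Lx-lipschitz_on (Xset d) (\<lambda>x. d $ i * x $ i)"
      using bounded_linear_plus_const_lipschitz
        [OF bounded_linear_mult_right[THEN bounded_linear_compose, OF bounded_linear_vec_nth],
         where S = "Xset d" and c = 0]
      by auto
    obtain Lp where "Lp-lipschitz_on (Xset d) (\<lambda>x. ((A *v x) $ i + u $ i) * (d $ i * x $ i))"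
      using lipschitz_on_mult_compact[OF X Ly Lx] by blast
    then have "(1 * Ly + Lp)-lipschitz_on (Xset d)
        (\<lambda>x. pospart ((A *v x) $ i + u $ i) - ((A *v x) $ i + u $ i) * (d $ i * x $ i))"
      by (intro lipschitz_on_diff lipschitz_on_compose2[OF Ly lipschitz_on_pospart])
    then have "(\<bar>lam $ i\<bar> * (1 * Ly + Lp))-lipschitz_on (Xset d)
        (\<lambda>x. lam $ i * selector_gap ((A *v x) $ i + u $ i) (d $ i * x $ i))"
      unfolding selector_gap_alt by (rule lipschitz_on_cmult_real)
    then show "\<exists>C. C-lipschitz_on (Xset d)
           (\<lambda>x. lam $ i * selector_gap ((A *v x) $ i + u $ i) (d $ i * x $ i))" ..
  qed
  then obtain L where "\<forall>i. (L i)-lipschitz_on (Xset d)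
           (\<lambda>x. lam $ i * selector_gap ((A *v x) $ i + u $ i) (d $ i * x $ i))"
    by (auto dest: choice)
  then have "(\<Sum>i\<in>UNIV. L i)-lipschitz_on (Xset d)
      (\<lambda>x. \<Sum>i\<in>UNIV. lam $ i * selector_gap ((A *v x) $ i + u $ i) (d $ i * x $ i))"
    by (intro lipschitz_on_sum) auto
  moreover have "Vinf d A u lam =
      (\<lambda>x. \<Sum>i\<in>UNIV. lam $ i * selector_gap ((A *v x) $ i + u $ i) (d $ i * x $ i))"
    using Vinf_eq_sum_selector_gap[OF lam] by (intro ext)
  ultimately show ?thesis by auto
qed

lemma equilibrium_exists:
  fixes d u :: "real^'n" and A :: "real^'n^'n"
  assumes d: "\<forall>i. d $ i > 0"
  shows "\<exists>x. is_equilibrium d A u x"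
proof -
  define g where
    "g = (\<lambda>x::real^'n. \<chi> i. min 1 (max 0 (d $ i * x $ i + ((A *v x) $ i + u $ i))) / d $ i)"
  have d_g: "d $ i * g x $ i = min 1 (max 0 (d $ i * x $ i + ((A *v x) $ i + u $ i)))" for x i
    using d by (simp add: g_def less_imp_neq[symmetric])
  have "continuous_on (Xset d) g"
    unfolding g_def using d
    by (intro continuous_on_vec_lambda continuous_intros
        linear_continuous_on[OF matrix_vector_mul_bounded_linear]) (auto simp: less_imp_neq[symmetric])
  moreover have "g ` Xset d \<subseteq> Xset d"
    by (auto simp: Xset_iff d_g)
  moreover have "compact (Xset d)" "convex (Xset d)"
    using Xset_eq_cbox[OF d] by auto
  moreover have "Xset d \<noteq> {}"
    using Xset_iff[of 0 d] by auto
  ultimately obtain x where "g x = x"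
    using brouwer by blast
  then have "d $ i * x $ i \<in> hsel ((A *v x) $ i + u $ i)" for i
    using d_g[of i x] by (intro clamp_fixed_point_in_hsel) simp
  then show ?thesis
    by (auto simp: is_equilibrium_iff)
qed

lemma inner_lyapunov_form:
  fixes e lam :: "real^'n" and A :: "real^'n^'n"
  shows "e \<bullet> ((transpose A ** diagm lam + diagm lam ** A) *v e)
         = 2 * (\<Sum>i\<in>UNIV. lam $ i * (e $ i * (A *v e) $ i))"
proof -
  have "e \<bullet> (transpose A *v w) = (A *v e) \<bullet> w" for w :: "real^'n"
  proof -
    have "transpose A *v w = w v* A"
      using vector_transpose_matrix[of w "transpose A"] by simp
    then show ?thesis
      using dot_lmul_matrix[of w A e] by (simp add: inner_commute)
  qed
  moreover have "(transpose A ** diagm lam + diagm lam ** A) *v e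
      = transpose A *v (diagm lam *v e) + diagm lam *v (A *v e)"
    by (simp add: matrix_vector_mult_add_rdistrib matrix_vector_mul_assoc del: diagm_mult_vec)
  ultimately have "e \<bullet> ((transpose A ** diagm lam + diagm lam ** A) *v e)
      = (A *v e) \<bullet> (diagm lam *v e) + e \<bullet> (diagm lam *v (A *v e))"
    by (simp add: inner_add_right del: diagm_mult_vec)
  also have "\<dots> = 2 * (\<Sum>i\<in>UNIV. lam $ i * (e $ i * (A *v e) $ i))"
    by (simp add: inner_vec_def sum_distrib_left sum.distrib[symmetric] algebra_simps)
  finally show ?thesis .
qed

lemma equilibrium_unique:
  fixes d lam u x1 x2 :: "real^'n" and A :: "real^'n^'n"
  assumes d: "\<forall>i. d $ i > 0" and cert: "lds_certificate A lam"
    and x1: "is_equilibrium d A u x1" and x2: "is_equilibrium d A u x2"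
  shows "x1 = x2"
proof (rule ccontr)
  assume "x1 \<noteq> x2"
  define e where "e = x1 - x2"
  have "e \<noteq> 0" using \<open>x1 \<noteq> x2\<close> by (simp add: e_def)
  have lam: "\<forall>i. lam $ i > 0"
    and neg: "neg_definite (transpose A ** diagm lam + diagm lam ** A)"
    using cert by (auto simp: lds_certificate_def)
  have "0 \<le> e $ i * (A *v e) $ i" for i
  proof -
    have "(A *v e) $ i = ((A *v x1) $ i + u $ i) - ((A *v x2) $ i + u $ i)"
      by (simp add: e_def matrix_vector_mult_diff_distrib)
    moreover have "0 \<le> (((A *v x1) $ i + u $ i) - ((A *v x2) $ i + u $ i))
        * (d $ i * x1 $ i - d $ i * x2 $ i)"
      using x1 x2 by (intro hsel_monotone) (auto simp: is_equilibrium_iff)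
    ultimately have "0 \<le> (A *v e) $ i * (d $ i * x1 $ i - d $ i * x2 $ i)"
      by simp
    then have "0 \<le> d $ i * (e $ i * (A *v e) $ i)"
      by (simp add: e_def algebra_simps)
    then show ?thesis
      using d[rule_format, of i] by (simp add: zero_le_mult_iff)
  qed
  then have "0 \<le> e \<bullet> ((transpose A ** diagm lam + diagm lam ** A) *v e)"
    using lam by (simp add: inner_lyapunov_form sum_nonneg less_imp_le)
  with neg \<open>e \<noteq> 0\<close> show False
    by (simp add: neg_definite_def not_le[symmetric])
qed

lemma Vinf_positive_definite:
  fixes d lam u :: "real^'n" and A :: "real^'n^'n"
  assumes d: "\<forall>i. d $ i > 0" and cert: "lds_certificate A lam"
  shows "\<exists>xs. (\<forall>x. is_equilibrium d A u x \<longleftrightarrow> x = xs) \<and> xs \<in> Xset d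
                \<and> Vinf d A u lam xs = 0
                \<and> (\<forall>x \<in> Xset d. x \<noteq> xs \<longrightarrow> Vinf d A u lam x > 0)"
proof -
  have lam: "\<forall>i. lam $ i > 0"
    using cert by (simp add: lds_certificate_def)
  obtain xs where xs: "is_equilibrium d A u xs"
    using equilibrium_exists[OF d] by blast
  then have "\<forall>x. is_equilibrium d A u x \<longleftrightarrow> x = xs"
    using equilibrium_unique[OF d cert] by blast
  moreover have "xs \<in> Xset d"
    using xs by (rule equilibrium_in_Xset)
  ultimately show ?thesis
    using Vinf_eq_0_iff_equilibrium[OF lam] Vinf_nonneg[of lam] lam
    by (metis order_neq_le_trans less_imp_le)
qed

theorem proposition8:
  fixes d lam u :: "real^'n" and W :: "real^'n^'n"
  defines "A \<equiv> W - diagm d"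
  assumes d_pos: "\<forall>i. d $ i > 0"
    and lam_pos: "\<forall>i. lam $ i > 0"
  shows
    "(\<forall>x \<in> Xset d.
        Vinf d A u lam x =
          (\<Sum>i\<in>UNIV. lam $ i * (pospart ((A *v x) $ i + u $ i) * (1 - d $ i * x $ i)
                                 + negpart ((A *v x) $ i + u $ i) * (d $ i * x $ i)))
      \<and> Vinf d A u lam x =
          (\<Sum>i\<in>UNIV. lam $ i * (pospart ((A *v x) $ i + u $ i)
                                 - d $ i * ((A *v x) $ i + u $ i) * x $ i)))
     \<and> (\<exists>C. C-lipschitz_on (Xset d) (Vinf d A u lam))
     \<and> (\<forall>x \<in> Xset d. Vinf d A u lam x \<ge> 0)
     \<and> (\<forall>x \<in> Xset d. Vinf d A u lam x = 0 \<longleftrightarrow> is_equilibrium d A u x)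
     \<and> (lds_certificate A lam \<longrightarrow>
          (\<exists>xs. (\<forall>x. is_equilibrium d A u x \<longleftrightarrow> x = xs) \<and> xs \<in> Xset d
                \<and> Vinf d A u lam xs = 0
                \<and> (\<forall>x \<in> Xset d. x \<noteq> xs \<longrightarrow> Vinf d A u lam x > 0)))"
proof -
  have lam_nonneg: "\<forall>i. lam $ i \<ge> 0"
    using lam_pos by (simp add: less_imp_le)
  show ?thesis
    using Vinf_closed_forms[OF lam_nonneg, where A = A and u = u]
      Vinf_lipschitz[OF d_pos lam_nonneg] Vinf_nonneg[OF lam_nonneg, where A = A and u = u]
      Vinf_eq_0_iff_equilibrium[OF lam_pos, where A = A and u = u]
      Vinf_positive_definite[OF d_pos]
    by blast
qed

end
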